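(* Let $\mathcal{M}_1=\{A\in\mathbb{C}^{3\times3}\mid \deg(m_A)\le 2\}$. Then for all $A\in\mathcal{M}_1$: $c_3(A)=0$, $c_4(A)=0$, $d_2(A)^3=d_3(A)^2$, and $d_3(A)\,c_1(A)=d_2(A)\,c_2(A)$.
   Context: $m_A$ is the minimal polynomial of $A$. For $A\in\mathbb{C}^{3\times3}$: $c_1(A)=A-\frac13\mathrm{tr}(A)I_3$; $c_2(A)=c_1(c_1(A)^2)$; $d_2(A)=\frac16\mathrm{tr}(c_1(A)^2)$; $d_3(A)=\frac12\det(c_1(A))$; $c_3(A)$ is the cubic form $\underline{x}\mapsto\det(\underline{x}\,|\,A\underline{x}\,|\,A^2\underline{x})$ on $\mathbb{C}^3$ (matrix with these columns); $c_4(A)$ is the cubic form on row vectors $\underline{x}^T\mapsto\det$ of the matrix with rows $\underline{x}^T,\underline{x}^TA,\underline{x}^TA^2$. *)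

theory Defs
  imports "HOL-Analysis.Analysis"
begin

type_synonym cmat3 = "complex^3^3"

text \<open>Matrix powers w.r.t. the matrix product (the ring power on the type ^ is componentwise).\<close>
definition matpow :: "'a::comm_ring_1^'n^'n \<Rightarrow> nat \<Rightarrow> 'a^'n^'n" where
  "matpow A k = (((**) A) ^^ k) (mat 1)"

definition mscale :: "'a::comm_ring_1 \<Rightarrow> 'a^'n^'m \<Rightarrow> 'a^'n^'m" where
  "mscale c M = (\<chi> i j. c * M $ i $ j)"

definition poly_mat :: "'a::comm_ring_1 poly \<Rightarrow> 'a^'n^'n \<Rightarrow> 'a^'n^'n" where
  "poly_mat p A = (\<Sum>i\<le>degree p. mscale (coeff p i) (matpow A i))"

definition minpoly_mat :: "'a::field^'n^'n \<Rightarrow> 'a poly" where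
  "minpoly_mat A = (THE p. lead_coeff p = 1 \<and> poly_mat p A = 0 \<and>
                      (\<forall>q. poly_mat q A = 0 \<longrightarrow> p dvd q))"

definition c1 :: "cmat3 \<Rightarrow> cmat3" where
  "c1 A = A - mat (trace A / 3)"

definition c2 :: "cmat3 \<Rightarrow> cmat3" where
  "c2 A = c1 (c1 A ** c1 A)"

definition d2 :: "cmat3 \<Rightarrow> complex" where
  "d2 A = trace (c1 A ** c1 A) / 6"

definition d3 :: "cmat3 \<Rightarrow> complex" where
  "d3 A = det (c1 A) / 2"

definition c3 :: "cmat3 \<Rightarrow> complex^3 \<Rightarrow> complex" where
  "c3 A x = det (transpose (vector [x, A *v x, (A ** A) *v x] :: cmat3))"

definition c4 :: "cmat3 \<Rightarrow> complex^3 \<Rightarrow> complex" where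
  "c4 A x = det (vector [x, x v* A, x v* (A ** A)] :: cmat3)"

end

theory Submission
  imports Defs
begin

text \<open>
  If \<open>deg m\<^sub>A \<le> 2\<close> then \<open>A\<^sup>2 = a A + b I\<close>, so \<open>A\<^sup>2 x\<close> and \<open>x\<^sup>T A\<^sup>2\<close> are linear
  combinations of the other two columns (rows) and both cubic forms vanish. The traceless part
  \<open>B = c\<^sub>1(A)\<close> satisfies a relation \<open>B\<^sup>2 = p B + q I\<close> as well. Computing \<open>B\<^sup>3\<close> from it and
  comparing with Cayley-Hamilton for a traceless matrix leaves \<open>(q/2 - p\<^sup>2) B = (p q - det B) I\<close>;
  taking traces gives \<open>det B = p q\<close>, and then \<open>q = 2 p\<^sup>2\<close> unless \<open>B = 0\<close>, in which case
  \<open>q = 0\<close>. Hence \<open>d\<^sub>2 = q/2\<close>, \<open>d\<^sub>3 = p q/2\<close> and \<open>c\<^sub>2(A) = p B\<close>, from which both identities follow.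
\<close>

lemma mscale_1 [simp]: "mscale 1 M = M"
  by (simp add: mscale_def vec_eq_iff)

lemma mscale_0_left [simp]: "mscale 0 M = 0"
  by (simp add: mscale_def vec_eq_iff)

lemma mscale_0_right [simp]: "mscale c 0 = 0"
  by (simp add: mscale_def vec_eq_iff)

lemma mscale_add_left: "mscale (a + b) M = mscale a M + mscale b M"
  by (simp add: mscale_def vec_eq_iff distrib_right)

lemma mscale_mat_1: "mscale c (mat 1) = mat c"
  by (simp add: mscale_def mat_def vec_eq_iff)

lemma mscale_minus_left: "mscale (- a) M = - mscale a M"
  by (simp add: mscale_def vec_eq_iff)

lemma mscale_mscale: "mscale a (mscale b M) = mscale (a * b) M"
  by (simp add: mscale_def vec_eq_iff mult.assoc)

lemma mscale_sum: "mscale c (sum f S) = (\<Sum>i\<in>S. mscale c (f i))"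
  by (induction S rule: infinite_finite_induct) (auto simp: mscale_def vec_eq_iff distrib_left)

lemma mscale_eq_0_iff: "mscale c M = 0 \<longleftrightarrow> c = 0 \<or> M = (0::'a::field^'n^'m)"
  unfolding mscale_def vec_eq_iff by auto

lemma matrix_mul_mscale: "(A::'a::comm_ring_1^'n^'m) ** mscale c M = mscale c (A ** M)"
  by (simp add: mscale_def vec_eq_iff matrix_matrix_mult_def sum_distrib_left algebra_simps)

lemma matrix_mul_mat: "(A::'a::comm_ring_1^'n^'m) ** mat c = mscale c A"
  by (simp add: mscale_def vec_eq_iff matrix_matrix_mult_def mat_def mult.commute if_distrib
           cong: if_cong)

lemma matrix_mul_sum: "(A::'a::comm_ring_1^'n^'m) ** sum f S = (\<Sum>i\<in>S. A ** f i)"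
  by (induction S rule: infinite_finite_induct) (auto simp: matrix_add_ldistrib)

lemma trace_mscale_add_mat:
  fixes B :: "'a::comm_ring_1^'n^'n"
  shows "trace (mscale c B + mat d) = c * trace B + of_nat CARD('n) * d"
  by (simp add: trace_def mscale_def mat_def sum.distrib sum_distrib_left)

lemma matpow_0 [simp]: "matpow A 0 = mat 1"
  by (simp add: matpow_def)

lemma matpow_Suc [simp]: "matpow A (Suc k) = A ** matpow A k"
  by (simp add: matpow_def)

lemma mat_diff: "mat (c - d) = mat c - (mat d :: 'a::ring_1^'n^'n)"
  by (simp add: mat_def vec_eq_iff)

lemma mat_minus: "mat (- c) = - (mat c :: 'a::ring_1^'n^'n)"
  by (simp add: mat_def vec_eq_iff)

lemma mat_eq_0_iff: "mat c = (0::'a::zero_neq_one^'n^'n) \<longleftrightarrow> c = 0"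
  by (auto simp: mat_def vec_eq_iff)

lemma matrix_diff_ldistrib: "(A::'a::comm_ring_1^'n^'m) ** (B - C) = A ** B - A ** C"
  by (simp add: vec_eq_iff matrix_matrix_mult_def sum_subtractf algebra_simps)

lemma matrix_diff_rdistrib: "((A::'a::comm_ring_1^'n^'m) - B) ** C = A ** C - B ** C"
  by (simp add: vec_eq_iff matrix_matrix_mult_def sum_subtractf algebra_simps)

lemma mat_matrix_mul: "mat c ** (A::'a::comm_ring_1^'n^'m) = mscale c A"
  by (simp add: mscale_def vec_eq_iff matrix_matrix_mult_def mat_def if_distrib if_distribR
      sum.delta cong: if_cong)

lemma poly_mat_eq_sum_lessThan:
  assumes "degree p < N"
  shows "poly_mat p A = (\<Sum>i<N. mscale (coeff p i) (matpow A i))"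
  unfolding poly_mat_def
  by (rule sum.mono_neutral_left) (use assms in \<open>auto simp: coeff_eq_0\<close>)

lemma poly_mat_0 [simp]: "poly_mat 0 A = 0"
  by (simp add: poly_mat_def mscale_def vec_eq_iff)

lemma poly_mat_add: "poly_mat (p + q) A = poly_mat p A + poly_mat q A"
proof -
  let ?N = "Suc (degree p + degree q)"
  have "degree (p + q) < ?N"
    using degree_add_le_max[of p q] by auto
  then show ?thesis
    by (simp add: poly_mat_eq_sum_lessThan[where N = ?N] mscale_add_left sum.distrib)
qed

lemma poly_mat_smult: "poly_mat (smult c p) A = mscale c (poly_mat p A)"
proof -
  have "degree (smult c p) < Suc (degree p)"
    using degree_smult_le[of c p] by auto
  then show ?thesis
    by (simp add: poly_mat_eq_sum_lessThan[where N = "Suc (degree p)"] mscale_sum mscale_mscale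
        del: sum.lessThan_Suc)
qed

lemma poly_mat_pCons: "poly_mat (pCons a p) A = mat a + A ** poly_mat p A"
proof -
  let ?N = "Suc (degree p)"
  have "degree (pCons a p) < Suc ?N"
    by simp
  then show ?thesis
    by (simp add: poly_mat_eq_sum_lessThan[where N = ?N] poly_mat_eq_sum_lessThan[where N = "Suc ?N"]
        sum.lessThan_Suc_shift matrix_mul_sum matrix_mul_mscale mscale_mat_1 matrix_add_ldistrib
        matrix_mul_mat
        del: sum.lessThan_Suc)
qed

lemma poly_mat_mult_eq_0:
  assumes "poly_mat p A = 0"
  shows "poly_mat (p * s) A = 0"
proof (induction s)
  case (pCons a s)
  have "p * pCons a s = smult a p + pCons 0 (p * s)"
    by (simp add: mult_pCons_right)
  with pCons assms show ?case
    by (simp add: poly_mat_add poly_mat_smult poly_mat_pCons)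
qed simp

lemma monic_poly_dvd_antisym:
  fixes p q :: "'a::idom poly"
  assumes "lead_coeff p = 1" "lead_coeff q = 1" "p dvd q" "q dvd p"
  shows "p = q"
proof -
  obtain k where k: "q = p * k"
    using \<open>p dvd q\<close> ..
  have "p \<noteq> 0" "q \<noteq> 0" "k \<noteq> 0"
    using assms k by auto
  then have "degree p = degree q"
    using assms(3,4) by (simp add: dvd_imp_degree_le order_antisym)
  then have "degree k = 0"
    using k \<open>p \<noteq> 0\<close> \<open>k \<noteq> 0\<close> by (simp add: degree_mult_eq)
  moreover have "lead_coeff k = 1"
    using assms(1,2) k by (simp add: lead_coeff_mult)
  ultimately have "k = 1"
    by (metis degree_0_id one_pCons)
  with k show ?thesis
    by simp
qed

lemma monic_annihilator_dvd_all_exists: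
  fixes A :: "'a::field^'n^'n"
  assumes "p \<noteq> 0" "poly_mat p A = 0"
  shows "\<exists>m. lead_coeff m = 1 \<and> poly_mat m A = 0 \<and> (\<forall>q. poly_mat q A = 0 \<longrightarrow> m dvd q)"
proof -
  let ?annihilates = "\<lambda>q. q \<noteq> 0 \<and> poly_mat q A = 0"
  obtain p0 where p0: "?annihilates p0" and least: "\<And>q. ?annihilates q \<Longrightarrow> degree p0 \<le> degree q"
    using ex_has_least_nat[of ?annihilates p degree] assms by blast
  define m where "m = smult (inverse (lead_coeff p0)) p0"
  have m: "lead_coeff m = 1" "poly_mat m A = 0" "degree m = degree p0"
    using p0 by (simp_all add: m_def poly_mat_smult)
  then have "m \<noteq> 0"
    by auto
  have "m dvd q" if "poly_mat q A = 0" for q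
  proof (rule ccontr)
    assume "\<not> m dvd q"
    then have "q mod m \<noteq> 0" and "degree (q mod m) < degree p0"
      using m \<open>m \<noteq> 0\<close> degree_mod_less_degree[of m q] by (auto simp: mod_eq_0_iff_dvd)
    moreover have "poly_mat (q mod m) A = 0"
      using poly_mat_add[of "m * (q div m)" "q mod m" A] poly_mat_mult_eq_0[OF m(2)] that
      by simp
    ultimately show False
      using least by fastforce
  qed
  with m show ?thesis
    by blast
qed

lemma minpoly_mat_monic_annihilator:
  fixes A :: "'a::field^'n^'n"
  assumes "p \<noteq> 0" "poly_mat p A = 0"
  shows "lead_coeff (minpoly_mat A) = 1" "poly_mat (minpoly_mat A) A = 0"
proof -
  have "\<exists>!m. lead_coeff m = 1 \<and> poly_mat m A = 0 \<and> (\<forall>q. poly_mat q A = 0 \<longrightarrow> m dvd q)"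
    using monic_annihilator_dvd_all_exists[OF assms] monic_poly_dvd_antisym by blast
  from theI'[OF this] show "lead_coeff (minpoly_mat A) = 1" "poly_mat (minpoly_mat A) A = 0"
    unfolding minpoly_mat_def by blast+
qed

lemma monic_degree_2_poly_eq:
  fixes q :: "'a::zero_neq_one poly"
  assumes "degree q = 2" "lead_coeff q = 1"
  shows "q = [:coeff q 0, coeff q 1, 1:]"
proof (rule poly_eqI)
  fix n
  show "coeff q n = coeff [:coeff q 0, coeff q 1, 1:] n"
    using assms
    by (cases "n < 3")
       (auto simp: coeff_pCons coeff_eq_0 less_Suc_eq numeral_3_eq_3 numeral_2_eq_2 split: nat.split)
qed

lemma square_eq_if_poly_mat_monic_quadratic:
  fixes A :: "'a::comm_ring_1^'n^'n"
  assumes "poly_mat [:b, a, 1:] A = 0"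
  shows "A ** A = mscale (- a) A + mat (- b)"
proof -
  have "mat b + (mscale a A + A ** A) = 0"
    using assms by (simp add: poly_mat_pCons matrix_add_ldistrib matrix_mul_mat)
  moreover have "A ** A = (mat b + (mscale a A + A ** A)) - mat b - mscale a A"
    by simp
  ultimately show ?thesis
    by (simp add: mscale_minus_left mat_minus)
qed

lemma square_lincomb_if_annihilator_degree_le_2:
  fixes A :: "'a::field^'n^'n"
  assumes "lead_coeff m = 1" "degree m \<le> 2" "poly_mat m A = 0"
  shows "\<exists>a b. A ** A = mscale a A + mat b"
proof -
  define q where "q = m * monom 1 (2 - degree m)"
  have "m \<noteq> 0"
    using assms(1) by auto
  then have "degree q = 2" "lead_coeff q = 1"
    using assms(1,2) unfolding q_def lead_coeff_mult by (simp_all add: degree_mult_eq degree_monom_eq)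
  then have "q = [:coeff q 0, coeff q 1, 1:]"
    by (rule monic_degree_2_poly_eq)
  moreover have "poly_mat q A = 0"
    unfolding q_def using assms(3) by (rule poly_mat_mult_eq_0)
  ultimately show ?thesis
    using square_eq_if_poly_mat_monic_quadratic by metis
qed

lemma cayley_hamilton_3:
  fixes A :: "'a::field_char_0^3^3"
  shows "A ** (A ** A)
    = mscale (trace A) (A ** A) - mscale ((trace A ^ 2 - trace (A ** A)) / 2) A + mat (det A)"
  by (simp add: vec_eq_iff forall_3 matrix_matrix_mult_def sum_3 mat_def mscale_def det_3 trace_def
      field_simps power2_eq_square)

lemma square_lincomb_if_minpoly_degree_le_2:
  fixes A :: "'a::field_char_0^3^3"
  assumes "degree (minpoly_mat A) \<le> 2"
  shows "\<exists>a b. A ** A = mscale a A + mat b"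
proof -
  let ?e2 = "(trace A ^ 2 - trace (A ** A)) / 2"
  have "poly_mat [:- det A, ?e2, - trace A, 1:] A = 0"
    by (simp add: poly_mat_pCons matrix_add_ldistrib matrix_mul_mat matrix_mul_mscale cayley_hamilton_3)
       (simp add: vec_eq_iff mat_def mscale_def algebra_simps)
  then show ?thesis
    using minpoly_mat_monic_annihilator[of "[:- det A, ?e2, - trace A, 1:]" A] assms
      square_lincomb_if_annihilator_degree_le_2 by auto
qed

lemma square_shift:
  fixes A :: "'a::comm_ring_1^'n^'n"
  assumes "A ** A = mscale a A + mat b"
  shows "(A - mat t) ** (A - mat t) = mscale (a - 2 * t) (A - mat t) + mat (b + a * t - t ^ 2)"
  using assms
  by (simp add: matrix_diff_ldistrib matrix_diff_rdistrib matrix_mul_mat mat_matrix_mul)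
     (simp add: vec_eq_iff mat_def mscale_def algebra_simps power2_eq_square)

lemma mscale_eq_mat_if_trace_0:
  fixes B :: "'a::field_char_0^'n^'n"
  assumes "trace B = 0" "mscale c B = mat d"
  shows "d = 0" "c = 0 \<or> B = 0"
proof -
  have "of_nat CARD('n) * d = 0"
    using trace_mscale_add_mat[of c B 0] trace_mscale_add_mat[of 0 B d] assms by simp
  then show "d = 0"
    by simp
  with assms(2) show "c = 0 \<or> B = 0"
    by (simp add: mscale_eq_0_iff)
qed

lemma traceless_square_lincomb:
  fixes B :: "'a::field_char_0^3^3"
  assumes "trace B = 0" "B ** B = mscale p B + mat q"
  shows "trace (B ** B) = 3 * q" "det B = p * q" "q = 0 \<or> q = 2 * p ^ 2"
proof -
  show tr: "trace (B ** B) = 3 * q"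
    using assms trace_mscale_add_mat[of p B q] by simp
  have "B ** (B ** B) = mscale (p ^ 2 + q) B + mat (p * q)"
    using assms(2)
    by (simp add: matrix_add_ldistrib matrix_mul_mscale matrix_mul_mat)
       (simp add: vec_eq_iff mat_def mscale_def algebra_simps power2_eq_square)
  moreover have "B ** (B ** B) = mscale (3 * q / 2) B + mat (det B)"
    using cayley_hamilton_3[of B] assms(1) tr by (simp add: mscale_minus_left)
  moreover have "mscale (3 * q / 2) B = mscale (p ^ 2 + q) B + mscale (q / 2 - p ^ 2) B"
    unfolding mscale_add_left[symmetric] by (simp add: field_simps)
  ultimately have "mat (p * q) = mscale (q / 2 - p ^ 2) B + mat (det B)"
    by (simp only: add.assoc add_left_cancel)
  then have "mscale (q / 2 - p ^ 2) B = mat (p * q - det B)"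
    by (simp add: mat_diff eq_diff_eq)
  then have "p * q - det B = 0" "q / 2 - p ^ 2 = 0 \<or> B = 0"
    using mscale_eq_mat_if_trace_0 assms(1) by blast+
  then show "det B = p * q"
    by simp
  show "q = 0 \<or> q = 2 * p ^ 2"
  proof (cases "B = 0")
    case True
    with assms(2) show ?thesis
      by (simp add: mat_eq_0_iff)
  next
    case False
    with \<open>q / 2 - p ^ 2 = 0 \<or> B = 0\<close> show ?thesis
      by simp
  qed
qed

lemma c3_eq_0_if_square_lincomb:
  assumes "A ** A = mscale a A + mat b"
  shows "c3 A x = 0"
  unfolding c3_def assms
  by (simp add: det_3 transpose_def matrix_vector_mult_def sum_3 mscale_def mat_def algebra_simps)

lemma c4_eq_0_if_square_lincomb:
  assumes "A ** A = mscale a A + mat b"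
  shows "c4 A x = 0"
  unfolding c4_def assms
  by (simp add: det_3 vector_matrix_mult_def sum_3 mscale_def mat_def algebra_simps)

lemma trace_c1: "trace (c1 A) = 0"
  by (simp add: c1_def trace_def sum_3 mat_def field_simps)

lemma d2_d3_c2_if_square_lincomb:
  assumes "A ** A = mscale a A + mat b"
  shows "d2 A ^ 3 = d3 A ^ 2" "mscale (d3 A) (c1 A) = mscale (d2 A) (c2 A)"
proof -
  define B where "B = c1 A"
  obtain p q where BB: "B ** B = mscale p B + mat q"
    using square_shift[OF assms] unfolding B_def c1_def by blast
  note B = traceless_square_lincomb[OF trace_c1[of A, folded B_def] BB]
  have d2: "d2 A = q / 2" and d3: "d3 A = p * q / 2"
    using B by (simp_all add: d2_def d3_def B_def[symmetric])
  have "c2 A = mscale p B"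
    unfolding c2_def B_def[symmetric] c1_def[of "B ** B"] B(1) by (simp add: BB)
  then show "mscale (d3 A) (c1 A) = mscale (d2 A) (c2 A)"
    by (simp add: d2 d3 mscale_mscale B_def[symmetric] mult.commute)
  show "d2 A ^ 3 = d3 A ^ 2"
    using B(3) by (elim disjE) (simp_all add: d2 d3 field_simps eval_nat_numeral)
qed

theorem proposition4p4:
  fixes A :: "complex^3^3"
  assumes "degree (minpoly_mat A) \<le> 2"
  shows "c3 A = (\<lambda>_. 0) \<and> c4 A = (\<lambda>_. 0) \<and> d2 A ^ 3 = d3 A ^ 2
         \<and> mscale (d3 A) (c1 A) = mscale (d2 A) (c2 A)"
proof -
  obtain a b where "A ** A = mscale a A + mat b"
    using square_lincomb_if_minpoly_degree_le_2[OF assms] by blast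
  then show ?thesis
    using c3_eq_0_if_square_lincomb c4_eq_0_if_square_lincomb d2_d3_c2_if_square_lincomb by blast
qed

end
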